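(* Let $p\in[1,\infty)$. Then for every $f\in\bigcup_{s\in(0,\infty)}{\rm B}^\kappa_{s,p}(\mathbb{R}^n)$, $$\lim_{s\to0^+}s\int_0^1t^{-(1+\frac{ps}{2})}\int_{\mathbb{R}^n}P_t^\kappa(|f-f(x)|^p)(x)\,\mu_\kappa(dx)\,dt=0.$$
   Context: Dunkl setting on $\mathbb{R}^n$: root system $\mathcal{R}$ with reflections $r_\alpha$, positive subsystem $\mathcal{R}_+$, multiplicity $\kappa:\mathcal{R}\to[0,\infty)$ invariant under the reflection group. $\mu_\kappa=w_\kappa dx$ with $w_\kappa(x)=\prod_{\alpha\in\mathcal{R}_+}|\langle\alpha,x\rangle|^{2\kappa(\alpha)}$; $(P_t^\kappa)$ is the Dunkl heat semigroup generated by the Dunkl Laplacian $\Delta_\kappa f=\Delta f+2\sum_{\alpha\in\mathcal{R}_+}\kappa(\alpha)\big(\frac{\langle\alpha,\nabla f(x)\rangle}{\langle\alpha,x\rangle}-\frac{f(x)-f(r_\alpha x)}{\langle\alpha,x\rangle^2}\big)$, with heat kernel $p_t^\kappa$; $P_t^\kappa(|f-f(x)|^p)(x)=\int|f(y)-f(x)|^pp_t^\kappa(x,y)\mu_\kappa(dy)$. For $p\in[1,\infty)$, $s>0$: ${\rm N}^\kappa_{s,p}(f)=\big(\int_0^\infty t^{-(1+\frac{sp}{2})}\int P_t^\kappa(|f-f(x)|^p)(x)\mu_\kappa(dx)dt\big)^{1/p}$ and ${\rm B}^\kappa_{s,p}(\mathbb{R}^n)=\{f\in{\rm L}^p(\mu_\kappa):{\rm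 N}^\kappa_{s,p}(f)<\infty\}$. *)

theory Defs
  imports "HOL-Analysis.Analysis"
begin

definition refl_vec :: "real^'n \<Rightarrow> real^'n \<Rightarrow> real^'n" where
  "refl_vec \<alpha> x = x - ((2 * (\<alpha> \<bullet> x)) / (\<alpha> \<bullet> \<alpha>)) *\<^sub>R \<alpha>"

text \<open>Root system, normalised so that every root has squared length 2
  (the normalisation implicit in the given formula for the Dunkl Laplacian).\<close>
definition root_system :: "(real^'n) set \<Rightarrow> bool" where
  "root_system R \<longleftrightarrow> finite R \<and> 0 \<notin> R \<and> (\<forall>\<alpha>\<in>R. \<alpha> \<bullet> \<alpha> = 2) \<and>
     (\<forall>\<alpha>\<in>R. \<forall>\<beta>\<in>R. refl_vec \<alpha> \<beta> \<in> R) \<and>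
     (\<forall>\<alpha>\<in>R. \<forall>c::real. c *\<^sub>R \<alpha> \<in> R \<longrightarrow> c = 1 \<or> c = -1)"

definition positive_subsystem :: "(real^'n) set \<Rightarrow> (real^'n) set \<Rightarrow> bool" where
  "positive_subsystem R Rp \<longleftrightarrow>
     (\<exists>\<beta>. (\<forall>\<alpha>\<in>R. \<alpha> \<bullet> \<beta> \<noteq> 0) \<and> Rp = {\<alpha>\<in>R. \<alpha> \<bullet> \<beta> > 0})"

text \<open>Multiplicity function: nonnegative on R and invariant under the reflection
  group (equivalently under its generating reflections).\<close>
definition multiplicity :: "(real^'n) set \<Rightarrow> (real^'n \<Rightarrow> real) \<Rightarrow> bool" where
  "multiplicity R \<kappa> \<longleftrightarrow> (\<forall>\<alpha>\<in>R. \<kappa> \<alpha> \<ge> 0 \<and> (\<forall>\<beta>\<in>R. \<kappa> (refl_vec \<beta> \<alpha>) = \<kappa> \<alpha>))"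

definition dunkl_weight :: "(real^'n) set \<Rightarrow> (real^'n \<Rightarrow> real) \<Rightarrow> real^'n \<Rightarrow> real" where
  "dunkl_weight Rp \<kappa> x =
     (\<Prod>\<alpha>\<in>Rp. if \<kappa> \<alpha> = 0 then 1 else \<bar>\<alpha> \<bullet> x\<bar> powr (2 * \<kappa> \<alpha>))"

definition dunkl_measure :: "(real^'n) set \<Rightarrow> (real^'n \<Rightarrow> real) \<Rightarrow> (real^'n) measure" where
  "dunkl_measure Rp \<kappa> = density lborel (\<lambda>x. ennreal (dunkl_weight Rp \<kappa> x))"

text \<open>Real analyticity on R^n: local convergence of the Taylor series, written
  along lines (uniform radius), for a function all of whose line restrictions
  are C^infinity.\<close>
definition real_analytic_Rn :: "(real^'n \<Rightarrow> real) \<Rightarrow> bool" where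
  "real_analytic_Rn f \<longleftrightarrow>
     (\<forall>x0 h m t. ((deriv ^^ m) (\<lambda>t. f (x0 + t *\<^sub>R h))) differentiable (at t)) \<and>
     (\<forall>x0. \<exists>r>0. \<forall>h. norm h < r \<longrightarrow>
        (\<lambda>m. (deriv ^^ m) (\<lambda>t. f (x0 + t *\<^sub>R h)) 0 / fact m) sums f (x0 + h))"

text \<open>f is a joint eigenfunction of the Dunkl operators
  T_xi f(x) = d_xi f(x) + sum_{alpha in R+} kappa(alpha) <alpha,xi> (f(x) - f(r_alpha x)) / <alpha,x>
  with eigenvalues <xi,y>, normalised by f(0) = 1 (equation imposed off the
  reflecting hyperplanes, where the formula is literally defined).\<close>
definition dunkl_eigenfunction ::
  "(real^'n) set \<Rightarrow> (real^'n \<Rightarrow> real) \<Rightarrow> real^'n \<Rightarrow> (real^'n \<Rightarrow> real) \<Rightarrow> bool" where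
  "dunkl_eigenfunction Rp \<kappa> y f \<longleftrightarrow>
     real_analytic_Rn f \<and> f 0 = 1 \<and>
     (\<forall>x. (\<forall>\<alpha>\<in>Rp. \<alpha> \<bullet> x \<noteq> 0) \<longrightarrow>
        (\<exists>D. (f has_derivative D) (at x) \<and>
          (\<forall>\<xi>. D \<xi> + (\<Sum>\<alpha>\<in>Rp. \<kappa> \<alpha> * (\<alpha> \<bullet> \<xi>) * (f x - f (refl_vec \<alpha> x)) / (\<alpha> \<bullet> x))
                 = (\<xi> \<bullet> y) * f x)))"

text \<open>The Dunkl kernel E_kappa(x,y) (restricted to real arguments).\<close>
definition dunkl_kernel :: "(real^'n) set \<Rightarrow> (real^'n \<Rightarrow> real) \<Rightarrow> real^'n \<Rightarrow> real^'n \<Rightarrow> real" where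
  "dunkl_kernel Rp \<kappa> = (THE E. \<forall>y. dunkl_eigenfunction Rp \<kappa> y (\<lambda>x. E x y))"

definition dunkl_gamma :: "(real^'n) set \<Rightarrow> (real^'n \<Rightarrow> real) \<Rightarrow> real" where
  "dunkl_gamma Rp \<kappa> = (\<Sum>\<alpha>\<in>Rp. \<kappa> \<alpha>)"

definition dunkl_const :: "(real^'n) set \<Rightarrow> (real^'n \<Rightarrow> real) \<Rightarrow> real" where
  "dunkl_const Rp \<kappa> = (LINT x|lborel. exp (- (norm x)\<^sup>2 / 2) * dunkl_weight Rp \<kappa> x)"

text \<open>Dunkl heat kernel (Roesler): p_t(x,y) = M t^{-(gamma+n/2)} e^{-(|x|^2+|y|^2)/4t}
  E(x/sqrt(2t), y/sqrt(2t)), M = (2^{gamma+n/2} c_kappa)^{-1}.\<close>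
definition dunkl_heat_kernel ::
  "(real^'n) set \<Rightarrow> (real^'n \<Rightarrow> real) \<Rightarrow> real \<Rightarrow> real^'n \<Rightarrow> real^'n \<Rightarrow> real" where
  "dunkl_heat_kernel Rp \<kappa> t x y =
     (let g = dunkl_gamma Rp \<kappa> + real CARD('n) / 2 in
      1 / (2 powr g * dunkl_const Rp \<kappa>) * t powr (- g)
      * exp (- ((norm x)\<^sup>2 + (norm y)\<^sup>2) / (4 * t))
      * dunkl_kernel Rp \<kappa> ((1 / sqrt (2 * t)) *\<^sub>R x) ((1 / sqrt (2 * t)) *\<^sub>R y))"

definition dunkl_energy ::
  "(real^'n) set \<Rightarrow> (real^'n \<Rightarrow> real) \<Rightarrow> real \<Rightarrow> (real^'n \<Rightarrow> real) \<Rightarrow> real \<Rightarrow> ennreal" where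
  "dunkl_energy Rp \<kappa> p f t =
     (\<integral>\<^sup>+ x. (\<integral>\<^sup>+ y. ennreal (\<bar>f y - f x\<bar> powr p * dunkl_heat_kernel Rp \<kappa> t x y)
        \<partial>dunkl_measure Rp \<kappa>) \<partial>dunkl_measure Rp \<kappa>)"

definition besov_seminorm_pow ::
  "(real^'n) set \<Rightarrow> (real^'n \<Rightarrow> real) \<Rightarrow> real \<Rightarrow> real \<Rightarrow> (real^'n \<Rightarrow> real) \<Rightarrow> ennreal" where
  "besov_seminorm_pow Rp \<kappa> s p f =
     (\<integral>\<^sup>+ t\<in>{0<..}. ennreal (t powr (- (1 + s * p / 2))) * dunkl_energy Rp \<kappa> p f t \<partial>lborel)"

definition dunkl_Lp :: "(real^'n) set \<Rightarrow> (real^'n \<Rightarrow> real) \<Rightarrow> real \<Rightarrow> (real^'n \<Rightarrow> real) set" where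
  "dunkl_Lp Rp \<kappa> p = {f. f \<in> borel_measurable borel \<and>
      (\<integral>\<^sup>+ x. ennreal (\<bar>f x\<bar> powr p) \<partial>dunkl_measure Rp \<kappa>) < \<infinity>}"

text \<open>B^kappa_{s,p}: N_{s,p}(f) < infinity iff N_{s,p}(f)^p < infinity.\<close>
definition dunkl_besov ::
  "(real^'n) set \<Rightarrow> (real^'n \<Rightarrow> real) \<Rightarrow> real \<Rightarrow> real \<Rightarrow> (real^'n \<Rightarrow> real) set" where
  "dunkl_besov Rp \<kappa> s p = {f. f \<in> dunkl_Lp Rp \<kappa> p \<and> besov_seminorm_pow Rp \<kappa> s p f < \<infinity>}"

end

theory Submission
  imports Defs
begin

text \<open>For \<open>0 < t \<le> 1\<close> the weight \<open>t powr -(1 + p s / 2)\<close> increases with \<open>s\<close>. Hence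
  if \<open>f \<in> B(s0, p)\<close>, the integral over \<open>(0, 1]\<close> is bounded for all \<open>s \<le> s0\<close> by the
  finite quantity \<open>N(s0, p)(f)^p\<close>, and the factor \<open>s\<close> forces the limit \<open>0\<close>. Neither
  the heat kernel nor the root system hypotheses play any role.\<close>

lemma nn_integral_unit_interval_powr_le:
  fixes g :: "real \<Rightarrow> ennreal"
  assumes "a \<le> b"
  shows "(\<integral>\<^sup>+ t\<in>{0<..1}. ennreal (t powr (- a)) * g t \<partial>lborel)
       \<le> (\<integral>\<^sup>+ t\<in>{0<..}. ennreal (t powr (- b)) * g t \<partial>lborel)"
proof (rule nn_integral_mono)
  fix t :: real
  show "ennreal (t powr (- a)) * g t * indicator {0<..1} t
      \<le> ennreal (t powr (- b)) * g t * indicator {0<..} t"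
  proof (cases "t \<in> {0<..1}")
    case True
    then have "t powr (- a) \<le> t powr (- b)"
      using assms by (intro powr_mono') auto
    then show ?thesis
      using True by (auto intro: mult_right_mono ennreal_leI)
  qed simp
qed

lemma tendsto_ennreal_times_bounded_at_right_0:
  fixes F :: "real \<Rightarrow> ennreal"
  assumes bounded: "\<forall>\<^sub>F s in at_right 0. F s \<le> C" and finite: "C < \<infinity>"
  shows "((\<lambda>s. ennreal s * F s) \<longlongrightarrow> 0) (at_right 0)"
proof -
  obtain c where c: "C = ennreal c" "c \<ge> 0"
    using finite by (metis ennreal_cases top.extremum_strict)
  have "((\<lambda>s. ennreal (s * c)) \<longlongrightarrow> ennreal (0 * c)) (at_right 0)"
    by (intro tendsto_ennrealI tendsto_intros)
  then have lim: "((\<lambda>s. ennreal (s * c)) \<longlongrightarrow> 0) (at_right 0)"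
    by simp
  have "\<forall>\<^sub>F s in at_right 0. ennreal s * F s \<le> ennreal (s * c)"
    using bounded eventually_at_right_less
  proof eventually_elim
    case (elim s)
    then have "ennreal s * F s \<le> ennreal s * C"
      by (intro mult_left_mono) auto
    also have "\<dots> = ennreal (s * c)"
      using c elim by (simp add: ennreal_mult)
    finally show ?case .
  qed
  then show ?thesis
    by (intro tendsto_sandwich[OF _ _ tendsto_const lim]) simp_all
qed

theorem proposition3p1:
  fixes R Rp :: "(real^'n) set" and \<kappa> :: "real^'n \<Rightarrow> real"
    and p :: real and f :: "real^'n \<Rightarrow> real"
  assumes "root_system R" and "positive_subsystem R Rp" and "multiplicity R \<kappa>"
    and "p \<ge> 1"
    and "f \<in> (\<Union>s\<in>{0<..}. dunkl_besov Rp \<kappa> s p)"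
  shows "((\<lambda>s. ennreal s * (\<integral>\<^sup>+ t\<in>{0<..1}. ennreal (t powr (- (1 + p * s / 2)))
             * dunkl_energy Rp \<kappa> p f t \<partial>lborel)) \<longlongrightarrow> 0) (at_right 0)"
proof -
  from assms(5) obtain s\<^sub>0 where "s\<^sub>0 > 0" and "f \<in> dunkl_besov Rp \<kappa> s\<^sub>0 p"
    by auto
  then have finite: "besov_seminorm_pow Rp \<kappa> s\<^sub>0 p f < \<infinity>"
    by (simp add: dunkl_besov_def)
  have "\<forall>\<^sub>F s in at_right 0. s \<in> {0<..<s\<^sub>0}"
    using \<open>s\<^sub>0 > 0\<close> by (rule eventually_at_right_real)
  then have "\<forall>\<^sub>F s in at_right 0. (\<integral>\<^sup>+ t\<in>{0<..1}. ennreal (t powr (- (1 + p * s / 2)))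
             * dunkl_energy Rp \<kappa> p f t \<partial>lborel) \<le> besov_seminorm_pow Rp \<kappa> s\<^sub>0 p f"
  proof eventually_elim
    case (elim s)
    then have "1 + p * s / 2 \<le> 1 + s\<^sub>0 * p / 2"
      using \<open>p \<ge> 1\<close> by (simp add: mult.commute mult_left_mono)
    then show ?case
      unfolding besov_seminorm_pow_def by (rule nn_integral_unit_interval_powr_le)
  qed
  then show ?thesis
    using finite by (rule tendsto_ennreal_times_bounded_at_right_0)
qed

end
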